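(* Let $(X,\preceq,\{H_n\})$ be a half-space order and let a group $G$ act on $X$ unboundedly by quasi-automorphisms of defect bounded by $d$. Then there is a nonzero homogeneous quasimorphism $T_{(X,\preceq,\{H_n\})}:G\to\mathbb{R}$ of defect at most $2d$ such that for every $a\in X$ and $g\in G$, $$T_{(X,\preceq,\{H_n\})}(g)=\lim_{n\to\infty}\frac{h(g^na,a)}{n}.$$
   Context: A half-space filtration of $X$ is $\{H_n\}_{n\in\mathbb{Z}}$ with $H_{n+1}\subsetneq H_n$, $\bigcap H_n=\emptyset$, $\bigcup H_n=X$; height $h(a)=\sup\{n: a\in H_n\}$, $h(a,b)=h(a)-h(b)$. A half-space order $(X,\preceq,\{H_n\})$: $(X,\preceq)$ a poset, $\{H_n\}$ a half-space filtration, and for a constant $w$, $h(a,b)\geq w\Rightarrow a\succeq b$. The $G$-action is by quasi-automorphisms of defect bounded by $d$ if $|h(ga,gb)-h(a,b)|\leq d$ for all $g,a,b$; it is unbounded if there exist $g\in G$, $a\in X$ with $h(g^na)\to\pm\infty$ as $n\to\pm\infty$. A homogeneous quasimorphism is $f:G\to\mathbb{R}$ with defect $\sup_{g,k}|f(gk)-f(g)-f(k)|<\infty$ and $f(g^n)=nf(g)$ for $n\in\mathbb{N}$. *)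

theory Defs
  imports Complex_Main "HOL-Algebra.Group_Action"
begin

definition half_space_filtration :: "'x set \<Rightarrow> (int \<Rightarrow> 'x set) \<Rightarrow> bool" where
  "half_space_filtration X H \<longleftrightarrow>
     (\<forall>n. H (n + 1) \<subset> H n) \<and> (\<Inter>n. H n) = {} \<and> (\<Union>n. H n) = X"

definition height :: "(int \<Rightarrow> 'x set) \<Rightarrow> 'x \<Rightarrow> int" where
  "height H a = Sup {n. a \<in> H n}"

definition rel_height :: "(int \<Rightarrow> 'x set) \<Rightarrow> 'x \<Rightarrow> 'x \<Rightarrow> int" where
  "rel_height H a b = height H a - height H b"

definition partial_order_on_set :: "'x set \<Rightarrow> ('x \<Rightarrow> 'x \<Rightarrow> bool) \<Rightarrow> bool" where
  "partial_order_on_set X leq \<longleftrightarrow>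
     (\<forall>a\<in>X. leq a a) \<and>
     (\<forall>a\<in>X. \<forall>b\<in>X. leq a b \<and> leq b a \<longrightarrow> a = b) \<and>
     (\<forall>a\<in>X. \<forall>b\<in>X. \<forall>c\<in>X. leq a b \<and> leq b c \<longrightarrow> leq a c)"

definition half_space_order :: "'x set \<Rightarrow> ('x \<Rightarrow> 'x \<Rightarrow> bool) \<Rightarrow> (int \<Rightarrow> 'x set) \<Rightarrow> bool" where
  "half_space_order X leq H \<longleftrightarrow>
     partial_order_on_set X leq \<and> half_space_filtration X H \<and>
     (\<exists>w::int. \<forall>a\<in>X. \<forall>b\<in>X. rel_height H a b \<ge> w \<longrightarrow> leq b a)"

definition quasi_aut_action ::
  "('g, 'm) monoid_scheme \<Rightarrow> 'x set \<Rightarrow> ('x \<Rightarrow> 'x \<Rightarrow> bool) \<Rightarrow> (int \<Rightarrow> 'x set)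
     \<Rightarrow> ('g \<Rightarrow> 'x \<Rightarrow> 'x) \<Rightarrow> real \<Rightarrow> bool" where
  "quasi_aut_action G X leq H \<phi> d \<longleftrightarrow>
     group_action G X \<phi> \<and>
     (\<forall>g\<in>carrier G. \<forall>a\<in>X. \<forall>b\<in>X. leq a b \<longrightarrow> leq (\<phi> g a) (\<phi> g b)) \<and>
     (\<forall>g\<in>carrier G. \<forall>a\<in>X. \<forall>b\<in>X.
        \<bar>real_of_int (rel_height H (\<phi> g a) (\<phi> g b) - rel_height H a b)\<bar> \<le> d)"

definition unbounded_action ::
  "('g, 'm) monoid_scheme \<Rightarrow> 'x set \<Rightarrow> (int \<Rightarrow> 'x set) \<Rightarrow> ('g \<Rightarrow> 'x \<Rightarrow> 'x) \<Rightarrow> bool" where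
  "unbounded_action G X H \<phi> \<longleftrightarrow>
     (\<exists>g\<in>carrier G. \<exists>a\<in>X.
        (filterlim (\<lambda>n::int. height H (\<phi> (g [^]\<^bsub>G\<^esub> n) a)) at_top at_top \<and>
         filterlim (\<lambda>n::int. height H (\<phi> (g [^]\<^bsub>G\<^esub> n) a)) at_bot at_bot) \<or>
        (filterlim (\<lambda>n::int. height H (\<phi> (g [^]\<^bsub>G\<^esub> n) a)) at_bot at_top \<and>
         filterlim (\<lambda>n::int. height H (\<phi> (g [^]\<^bsub>G\<^esub> n) a)) at_top at_bot))"

definition homogeneous_quasimorphism_defect_le ::
  "('g, 'm) monoid_scheme \<Rightarrow> ('g \<Rightarrow> real) \<Rightarrow> real \<Rightarrow> bool" where
  "homogeneous_quasimorphism_defect_le G f D \<longleftrightarrow>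
     (\<forall>g\<in>carrier G. \<forall>k\<in>carrier G. \<bar>f (g \<otimes>\<^bsub>G\<^esub> k) - f g - f k\<bar> \<le> D) \<and>
     (\<forall>g\<in>carrier G. \<forall>n::nat. f (g [^]\<^bsub>G\<^esub> n) = real n * f g)"

end

theory Submission
  imports Defs
begin

text \<open>Since \<open>\<delta>\<close> is a cocycle, \<open>n \<mapsto> \<delta>(g\<^sup>n, a)\<close> is quasi-additive with defect \<open>d\<close>, so
  \<open>\<delta>(g\<^sup>n, a) / n\<close> converges to a limit \<open>\<tau> g\<close> independent of \<open>a\<close>; moreover \<open>\<delta>(g, y)\<close>
  lies within \<open>d\<close> of \<open>\<tau> g\<close> for every \<open>y\<close>. Writing \<open>\<delta>(g k, a) = \<delta>(g, k a) + \<delta>(k, a)\<close>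
  gives defect \<open>2 d\<close>, and if \<open>\<tau>\<close> vanished on the unbounded element then all heights
  along its orbit would stay within \<open>d\<close> of the starting height.\<close>

lemma quasi_additive_mult_bound:
  fixes b :: "nat \<Rightarrow> real"
  assumes "b 0 = 0" and "\<And>m n. \<bar>b (m + n) - b m - b n\<bar> \<le> D"
  shows "\<bar>b (k * n) - real k * b n\<bar> \<le> real k * D"
proof (induction k)
  case 0
  then show ?case using assms(1) by simp
next
  case (Suc k)
  have "b (Suc k * n) - real (Suc k) * b n
      = (b (k * n + n) - b (k * n) - b n) + (b (k * n) - real k * b n)"
    by (simp add: algebra_simps)
  then show ?case
    using assms(2)[of "k * n" n] Suc by (simp add: algebra_simps)
qed

lemma quasi_additive_div_bound:
  fixes b :: "nat \<Rightarrow> real"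
  assumes "b 0 = 0" and "\<And>m n. \<bar>b (m + n) - b m - b n\<bar> \<le> D" and "m \<ge> 1" "n \<ge> 1"
  shows "\<bar>b (m * n) / real (m * n) - b n / real n\<bar> \<le> D / real n"
proof -
  have pos: "real m > 0" "real n > 0" using assms(3,4) by auto
  have "\<bar>b (m * n) / real (m * n) - b n / real n\<bar> = \<bar>b (m * n) - real m * b n\<bar> / real (m * n)"
    using pos by (simp add: field_simps)
  also have "\<dots> \<le> real m * D / real (m * n)"
    using quasi_additive_mult_bound[where b = b, OF assms(1,2), of m n]
    by (intro divide_right_mono) auto
  also have "\<dots> = D / real n" using pos by simp
  finally show ?thesis .
qed

lemma quasi_additive_convergent:
  fixes b :: "nat \<Rightarrow> real"
  assumes "b 0 = 0" and "\<And>m n. \<bar>b (m + n) - b m - b n\<bar> \<le> D"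
  shows "convergent (\<lambda>n. b n / real n)"
proof -
  have close: "\<bar>b m / real m - b n / real n\<bar> \<le> D / real m + D / real n"
    if "m \<ge> 1" "n \<ge> 1" for m n
    using quasi_additive_div_bound[where b = b, OF assms, of m n]
      quasi_additive_div_bound[where b = b, OF assms, of n m] that
    by (simp add: mult.commute)
  have "Cauchy (\<lambda>n. b n / real n)"
  proof (rule metric_CauchyI)
    fix e :: real assume "e > 0"
    obtain M :: nat where M: "M \<ge> 1" "real M > 2 * D / e"
      by (metis reals_Archimedean2 max.cobounded1 max.cobounded2 of_nat_le_iff less_le_trans)
    have small: "D / real k < e / 2" if "k \<ge> M" for k
    proof -
      have "2 * D < e * real M" using M(2) \<open>e > 0\<close> by (simp add: field_simps)
      also have "\<dots> \<le> e * real k" using that \<open>e > 0\<close> by simp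
      finally show ?thesis using that M(1) by (simp add: field_simps)
    qed
    show "\<exists>M. \<forall>m\<ge>M. \<forall>n\<ge>M. dist (b m / real m) (b n / real n) < e"
    proof (intro exI[of _ M] allI impI)
      fix m n assume "m \<ge> M" "n \<ge> M"
      then show "dist (b m / real m) (b n / real n) < e"
        using close[of m n] small[of m] small[of n] M(1) unfolding dist_real_def by linarith
    qed
  qed
  then show ?thesis by (simp add: Cauchy_convergent_iff)
qed

lemma LIMSEQ_averages_abs_diff_le:
  fixes f :: "nat \<Rightarrow> real"
  assumes "(\<lambda>n. (\<Sum>j<n. f j) / real n) \<longlonglongrightarrow> L" and "\<And>j. \<bar>f j - c\<bar> \<le> e"
  shows "\<bar>L - c\<bar> \<le> e"
proof (rule LIMSEQ_le_const2)
  show "(\<lambda>n. \<bar>(\<Sum>j<n. f j) / real n - c\<bar>) \<longlonglongrightarrow> \<bar>L - c\<bar>"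
    by (intro tendsto_intros assms(1))
  show "\<exists>N. \<forall>n\<ge>N. \<bar>(\<Sum>j<n. f j) / real n - c\<bar> \<le> e"
  proof (intro exI allI impI)
    fix n :: nat assume "n \<ge> 1"
    then have "\<bar>(\<Sum>j<n. f j) / real n - c\<bar> = \<bar>\<Sum>j<n. f j - c\<bar> / real n"
      by (simp add: sum_subtractf field_simps)
    also have "\<dots> \<le> (\<Sum>j<n. \<bar>f j - c\<bar>) / real n"
      by (intro divide_right_mono sum_abs) simp
    also have "\<dots> \<le> real n * e / real n"
      using assms(2) sum_mono[of "{..<n}" "\<lambda>j. \<bar>f j - c\<bar>" "\<lambda>_. e"]
      by (intro divide_right_mono) auto
    also have "\<dots> = e" using \<open>n \<ge> 1\<close> by simp
    finally show "\<bar>(\<Sum>j<n. f j) / real n - c\<bar> \<le> e" .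
  qed
qed

locale bounded_displacement_action = group G + group_action G X \<phi>
  for G :: "('g, 'm) monoid_scheme" (structure) and X :: "'x set" and \<phi> +
  fixes ht :: "'x \<Rightarrow> real" and d :: real
  assumes nonempty: "X \<noteq> {}"
    and displacement_variation:
    "\<lbrakk>g \<in> carrier G; a \<in> X; b \<in> X\<rbrakk>
       \<Longrightarrow> \<bar>(ht (\<phi> g a) - ht a) - (ht (\<phi> g b) - ht b)\<bar> \<le> d"
begin

definition displacement :: "'g \<Rightarrow> 'x \<Rightarrow> real" where
  "displacement g a = ht (\<phi> g a) - ht a"

text \<open>The base point is immaterial, see \<open>LIMSEQ_translation_number\<close>.\<close>
definition translation_number :: "'g \<Rightarrow> real" where
  "translation_number g =
     lim (\<lambda>n. displacement (g [^] n) (SOME a. a \<in> X) / real n)"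

lemma action_closed: "\<lbrakk>g \<in> carrier G; a \<in> X\<rbrakk> \<Longrightarrow> \<phi> g a \<in> X"
  using element_image by blast

lemma displacement_one: "a \<in> X \<Longrightarrow> displacement \<one> a = 0"
  using id_eq_one by (metis displacement_def restrict_apply' diff_self)

lemma displacement_mult:
  "\<lbrakk>g \<in> carrier G; k \<in> carrier G; a \<in> X\<rbrakk>
     \<Longrightarrow> displacement (g \<otimes> k) a = displacement g (\<phi> k a) + displacement k a"
  by (simp add: displacement_def composition_rule)

lemma displacement_abs_diff_le:
  "\<lbrakk>g \<in> carrier G; a \<in> X; b \<in> X\<rbrakk> \<Longrightarrow> \<bar>displacement g a - displacement g b\<bar> \<le> d"
  unfolding displacement_def by (rule displacement_variation)

lemma displacement_pow_sum:
  fixes n :: nat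
  assumes "g \<in> carrier G" "a \<in> X"
  shows "displacement (g [^] n) a = (\<Sum>j<n. displacement g (\<phi> (g [^] j) a))"
proof (induction n)
  case 0
  then show ?case using displacement_one[OF assms(2)] by simp
next
  case (Suc n)
  then show ?case
    using nat_pow_Suc2[OF assms(1)]
      displacement_mult[OF assms(1) nat_pow_closed[OF assms(1)] assms(2)]
    by simp
qed

lemma displacement_pow_quasi_additive:
  fixes m n :: nat
  assumes "g \<in> carrier G" "a \<in> X"
  shows "\<bar>displacement (g [^] (m + n)) a - displacement (g [^] m) a - displacement (g [^] n) a\<bar>
    \<le> d"
proof -
  have gm: "g [^] m \<in> carrier G" and gn: "g [^] n \<in> carrier G"
    using assms(1) by simp_all
  have "displacement (g [^] (m + n)) a
      = displacement (g [^] m) (\<phi> (g [^] n) a) + displacement (g [^] n) a"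
    using displacement_mult[OF gm gn assms(2)] assms(1) by (simp add: nat_pow_mult)
  then show ?thesis
    using displacement_abs_diff_le[OF gm action_closed[OF gn assms(2)] assms(2)] by simp
qed

lemma LIMSEQ_translation_number:
  assumes "g \<in> carrier G" "a \<in> X"
  shows "(\<lambda>n. displacement (g [^] n) a / real n) \<longlonglongrightarrow> translation_number g"
proof -
  define a0 where "a0 = (SOME a. a \<in> X)"
  have a0: "a0 \<in> X" unfolding a0_def using assms(2) by (rule someI)
  have "convergent (\<lambda>n. displacement (g [^] n) a0 / real n)"
    using displacement_one[OF a0] displacement_pow_quasi_additive[OF assms(1) a0]
    by (intro quasi_additive_convergent[where D = d]) auto
  then have base: "(\<lambda>n. displacement (g [^] n) a0 / real n) \<longlonglongrightarrow> translation_number g"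
    by (simp add: translation_number_def a0_def convergent_LIMSEQ_iff)
  have "(\<lambda>n. displacement (g [^] n) a / real n - displacement (g [^] n) a0 / real n) \<longlonglongrightarrow> 0"
  proof (rule tendsto_0_le)
    show "(\<lambda>n. 1 / real n) \<longlonglongrightarrow> 0" by (intro tendsto_intros)
    have "\<bar>displacement (g [^] n) a - displacement (g [^] n) a0\<bar> / real n \<le> d / real n" for n
      using displacement_abs_diff_le[OF nat_pow_closed[OF assms(1)] assms(2) a0]
      by (intro divide_right_mono) auto
    then show "\<forall>\<^sub>F n in sequentially.
        norm (displacement (g [^] n) a / real n - displacement (g [^] n) a0 / real n) \<le> norm (1 / real n) * d"
      by (intro always_eventually allI) (simp add: diff_divide_distrib[symmetric])
  qed
  from tendsto_add[OF this base] show ?thesis by simp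
qed

lemma displacement_translation_number_abs_diff_le:
  assumes "g \<in> carrier G" "y \<in> X"
  shows "\<bar>displacement g y - translation_number g\<bar> \<le> d"
proof -
  have "(\<lambda>n. (\<Sum>j<n. displacement g (\<phi> (g [^] j) y)) / real n) \<longlonglongrightarrow> translation_number g"
    using LIMSEQ_translation_number[OF assms] by (simp add: displacement_pow_sum[OF assms])
  then have "\<bar>translation_number g - displacement g y\<bar> \<le> d"
  proof (rule LIMSEQ_averages_abs_diff_le)
    show "\<bar>displacement g (\<phi> (g [^] j) y) - displacement g y\<bar> \<le> d" for j :: nat
      using assms by (intro displacement_abs_diff_le action_closed) simp_all
  qed
  then show ?thesis by (simp add: abs_minus_commute)
qed

lemma translation_number_pow:
  fixes m :: nat
  assumes "g \<in> carrier G"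
  shows "translation_number (g [^] m) = real m * translation_number g"
proof -
  obtain a where a: "a \<in> X" using nonempty by blast
  show ?thesis
  proof (cases "m = 0")
    case True
    have "(\<lambda>n. displacement ((g [^] m) [^] n) a / real n) \<longlonglongrightarrow> 0"
      using True displacement_one[OF a] by simp
    then have "translation_number (g [^] m) = 0"
      by (rule LIMSEQ_unique[OF LIMSEQ_translation_number[OF nat_pow_closed[OF assms] a]])
    with True show ?thesis by simp
  next
    case False
    have "(\<lambda>n. real m * (displacement (g [^] (m * n)) a / real (m * n)))
        \<longlonglongrightarrow> real m * translation_number g"
      using LIMSEQ_subseq_LIMSEQ[OF LIMSEQ_translation_number[OF assms a], of "\<lambda>n. m * n"] False
      by (intro tendsto_intros) (simp_all add: strict_mono_def o_def)
    moreover have "(\<lambda>n. real m * (displacement (g [^] (m * n)) a / real (m * n)))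
        = (\<lambda>n. displacement ((g [^] m) [^] n) a / real n)"
      using False by (simp add: nat_pow_pow[OF assms] mult.commute)
    ultimately have "(\<lambda>n. displacement ((g [^] m) [^] n) a / real n)
        \<longlonglongrightarrow> real m * translation_number g"
      by simp
    then show ?thesis
      by (rule LIMSEQ_unique[OF LIMSEQ_translation_number[OF nat_pow_closed[OF assms] a]])
  qed
qed

lemma translation_number_mult_abs_diff_le:
  assumes "g \<in> carrier G" "k \<in> carrier G"
  shows "\<bar>translation_number (g \<otimes> k) - translation_number g - translation_number k\<bar> \<le> 2 * d"
proof -
  obtain a where a: "a \<in> X" using nonempty by blast
  have gk: "g \<otimes> k \<in> carrier G" using assms by simp
  have near: "\<bar>displacement (g \<otimes> k) y - (translation_number g + translation_number k)\<bar> \<le> 2 * d"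
    if "y \<in> X" for y
    using displacement_mult[OF assms that] displacement_translation_number_abs_diff_le[OF assms(2) that]
      displacement_translation_number_abs_diff_le[OF assms(1) action_closed[OF assms(2) that]]
    by linarith
  have "(\<lambda>n. (\<Sum>j<n. displacement (g \<otimes> k) (\<phi> ((g \<otimes> k) [^] j) a)) / real n)
      \<longlonglongrightarrow> translation_number (g \<otimes> k)"
    using LIMSEQ_translation_number[OF gk a] by (simp add: displacement_pow_sum[OF gk a])
  then have "\<bar>translation_number (g \<otimes> k) - (translation_number g + translation_number k)\<bar> \<le> 2 * d"
  proof (rule LIMSEQ_averages_abs_diff_le)
    show "\<bar>displacement (g \<otimes> k) (\<phi> ((g \<otimes> k) [^] j) a)
        - (translation_number g + translation_number k)\<bar> \<le> 2 * d" for j :: nat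
      using gk a by (intro near action_closed) simp_all
  qed
  then show ?thesis by linarith
qed

lemma translation_number_neq_0_if_unbounded:
  assumes "g \<in> carrier G" "a \<in> X" and unbounded: "\<And>B. \<exists>n::nat. B < \<bar>ht (\<phi> (g [^] n) a)\<bar>"
  shows "translation_number g \<noteq> 0"
proof
  assume "translation_number g = 0"
  then have bounded: "\<bar>displacement (g [^] n) a\<bar> \<le> d" for n :: nat
    using displacement_translation_number_abs_diff_le[OF nat_pow_closed[OF assms(1)] assms(2), of n]
      translation_number_pow[OF assms(1), of n]
    by simp
  then have "\<bar>ht (\<phi> (g [^] n) a)\<bar> \<le> d + \<bar>ht a\<bar>" for n :: nat
    using bounded[of n] unfolding displacement_def by arith
  then show False
    using unbounded[of "d + \<bar>ht a\<bar>"] by (auto simp: not_le[symmetric])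
qed

end

lemma ex_nat_less_abs_if_filterlim:
  fixes f :: "int \<Rightarrow> int" and B :: int
  assumes "filterlim f at_top at_top \<or> filterlim f at_bot at_top"
  shows "\<exists>n::nat. B < \<bar>f (int n)\<bar>"
proof -
  from assms have "\<forall>\<^sub>F n in sequentially. B < \<bar>f (int n)\<bar>"
  proof
    assume "filterlim f at_top at_top"
    then have "filterlim (\<lambda>n. f (int n)) at_top sequentially"
      using filterlim_int_sequentially by (rule filterlim_compose)
    then have "\<forall>\<^sub>F n in sequentially. B + 1 \<le> f (int n)"
      unfolding filterlim_at_top by (rule spec)
    then show ?thesis by (rule eventually_mono) linarith
  next
    assume "filterlim f at_bot at_top"
    then have "filterlim (\<lambda>n. f (int n)) at_bot sequentially"
      using filterlim_int_sequentially by (rule filterlim_compose)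
    then have "\<forall>\<^sub>F n in sequentially. f (int n) \<le> - B - 1"
      unfolding filterlim_at_bot by (rule spec)
    then show ?thesis by (rule eventually_mono) linarith
  qed
  then show ?thesis by (auto simp: eventually_sequentially)
qed

theorem corollary2p2:
  fixes G :: "('g, 'm) monoid_scheme" and X :: "'x set"
    and leq :: "'x \<Rightarrow> 'x \<Rightarrow> bool" and H :: "int \<Rightarrow> 'x set"
    and \<phi> :: "'g \<Rightarrow> 'x \<Rightarrow> 'x" and d :: real
  assumes "group G"
    and "half_space_order X leq H"
    and "quasi_aut_action G X leq H \<phi> d"
    and "unbounded_action G X H \<phi>"
  shows "\<exists>T :: 'g \<Rightarrow> real.
           homogeneous_quasimorphism_defect_le G T (2 * d) \<and>
           (\<exists>g\<in>carrier G. T g \<noteq> 0) \<and>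
           (\<forall>a\<in>X. \<forall>g\<in>carrier G.
              (\<lambda>n::nat. real_of_int (rel_height H (\<phi> (g [^]\<^bsub>G\<^esub> n) a) a) / real n)
                \<longlonglongrightarrow> T g)"
proof -
  obtain g0 a0 where g0: "g0 \<in> carrier G" and a0: "a0 \<in> X" and divergent:
    "filterlim (\<lambda>n::int. height H (\<phi> (g0 [^]\<^bsub>G\<^esub> n) a0)) at_top at_top \<or>
     filterlim (\<lambda>n::int. height H (\<phi> (g0 [^]\<^bsub>G\<^esub> n) a0)) at_bot at_top"
    using assms(4) unfolding unbounded_action_def by blast
  interpret bounded_displacement_action G X \<phi> "\<lambda>x. real_of_int (height H x)" d
    using assms(1,3) a0
    unfolding bounded_displacement_action_def bounded_displacement_action_axioms_def
      quasi_aut_action_def rel_height_def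
    by (auto simp: algebra_simps)
  have "\<exists>n::nat. B < \<bar>real_of_int (height H (\<phi> (g0 [^]\<^bsub>G\<^esub> n) a0))\<bar>" for B
  proof -
    obtain n :: nat where "\<lceil>B\<rceil> < \<bar>height H (\<phi> (g0 [^]\<^bsub>G\<^esub> int n) a0)\<bar>"
      using ex_nat_less_abs_if_filterlim[OF divergent] by blast
    then have "B < \<bar>real_of_int (height H (\<phi> (g0 [^]\<^bsub>G\<^esub> n) a0))\<bar>"
      using le_of_int_ceiling[of B] by (simp add: int_pow_int) linarith
    then show ?thesis ..
  qed
  then have "translation_number g0 \<noteq> 0"
    by (rule translation_number_neq_0_if_unbounded[OF g0 a0])
  moreover have "(\<lambda>n::nat. real_of_int (rel_height H (\<phi> (g [^]\<^bsub>G\<^esub> n) a) a) / real n)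
      \<longlonglongrightarrow> translation_number g" if "a \<in> X" "g \<in> carrier G" for a g
    using LIMSEQ_translation_number[OF that(2,1)] by (simp add: displacement_def rel_height_def)
  moreover have "homogeneous_quasimorphism_defect_le G translation_number (2 * d)"
    unfolding homogeneous_quasimorphism_defect_le_def
    using translation_number_pow translation_number_mult_abs_diff_le by blast
  ultimately show ?thesis using g0 by blast
qed

end
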